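(* Let $G=H(T,C)$ be a generalized Halin graph such that $\kappa_{LLY}(u,v)>0$ for every edge $\{u,v\}$ of $G$, and let $x$ be a vertex of $T$ of maximum degree $D(T)$. If $T$ has exactly $D(T)$ leaves and $D(T)\ge 4$, then $d_T(x,y)\le 2$ for every vertex $y$ of $C$.
   Context: All graphs are finite, simple, undirected and connected; $d(\cdot,\cdot)$ is the shortest-path distance in $G$, $d_T(\cdot,\cdot)$ the distance in the tree $T$, and $d_v$ the degree of $v$. Lin-Lu-Yau curvature: for a vertex $v$ and $\alpha\in[0,1]$ let $m_v^\alpha(v)=\alpha$, $m_v^\alpha(u)=(1-\alpha)/d_v$ for neighbors $u$ of $v$, and $0$ elsewhere. For probability measures $m_1,m_2$, $W(m_1,m_2)=\inf_\pi\sum_{u,w}\pi(u,w)d(u,w)$ over couplings $\pi$ of $m_1,m_2$. For an edge $\{u,v\}$, $\kappa_\alpha(u,v)=1-W(m_u^\alpha,m_v^\alpha)$ and $\kappa_{LLY}(u,v)=\lim_{\alpha\to1}\kappa_\alpha(u,v)/(1-\alpha)$. A generalized Halin graph $H(T,C)$ is obtained from a tree $T$ with maximum degree $D(T)\ge3$ together with a planar embedding, by adding a cycle $C$ through all leaves of $T$ in the cyclic order in which they appear in the embedding. *)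

theory Defs
  imports "HOL-Analysis.Analysis"
begin

definition simple_graph :: "'a set \<Rightarrow> ('a \<Rightarrow> 'a \<Rightarrow> bool) \<Rightarrow> bool" where
  "simple_graph V adj \<longleftrightarrow> finite V \<and>
     (\<forall>u v. adj u v \<longrightarrow> u \<in> V \<and> v \<in> V \<and> u \<noteq> v \<and> adj v u)"

definition neighbors :: "'a set \<Rightarrow> ('a \<Rightarrow> 'a \<Rightarrow> bool) \<Rightarrow> 'a \<Rightarrow> 'a set" where
  "neighbors V adj v = {u \<in> V. adj v u}"

definition degree :: "'a set \<Rightarrow> ('a \<Rightarrow> 'a \<Rightarrow> bool) \<Rightarrow> 'a \<Rightarrow> nat" where
  "degree V adj v = card (neighbors V adj v)"

definition max_degree :: "'a set \<Rightarrow> ('a \<Rightarrow> 'a \<Rightarrow> bool) \<Rightarrow> nat" where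
  "max_degree V adj = Max (degree V adj ` V)"

definition is_walk :: "'a set \<Rightarrow> ('a \<Rightarrow> 'a \<Rightarrow> bool) \<Rightarrow> 'a list \<Rightarrow> bool" where
  "is_walk V adj xs \<longleftrightarrow> xs \<noteq> [] \<and> set xs \<subseteq> V \<and>
     (\<forall>i. Suc i < length xs \<longrightarrow> adj (xs ! i) (xs ! Suc i))"

definition connected_graph :: "'a set \<Rightarrow> ('a \<Rightarrow> 'a \<Rightarrow> bool) \<Rightarrow> bool" where
  "connected_graph V adj \<longleftrightarrow> V \<noteq> {} \<and>
     (\<forall>u\<in>V. \<forall>v\<in>V. \<exists>xs. is_walk V adj xs \<and> hd xs = u \<and> last xs = v)"

definition gdist :: "'a set \<Rightarrow> ('a \<Rightarrow> 'a \<Rightarrow> bool) \<Rightarrow> 'a \<Rightarrow> 'a \<Rightarrow> nat" where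
  "gdist V adj u v = (LEAST n. \<exists>xs. is_walk V adj xs \<and> hd xs = u \<and> last xs = v
                                   \<and> length xs = Suc n)"

definition is_cycle :: "'a set \<Rightarrow> ('a \<Rightarrow> 'a \<Rightarrow> bool) \<Rightarrow> 'a list \<Rightarrow> bool" where
  "is_cycle V adj xs \<longleftrightarrow> is_walk V adj xs \<and> distinct xs \<and> length xs \<ge> 3 \<and>
     adj (last xs) (hd xs)"

definition is_tree :: "'a set \<Rightarrow> ('a \<Rightarrow> 'a \<Rightarrow> bool) \<Rightarrow> bool" where
  "is_tree V adj \<longleftrightarrow> simple_graph V adj \<and> connected_graph V adj \<and>
     (\<nexists>xs. is_cycle V adj xs)"

definition is_leaf :: "'a set \<Rightarrow> ('a \<Rightarrow> 'a \<Rightarrow> bool) \<Rightarrow> 'a \<Rightarrow> bool" where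
  "is_leaf V adj v \<longleftrightarrow> v \<in> V \<and> degree V adj v = 1"

text \<open>A (combinatorial) planar embedding of a tree: at each vertex v, \<open>rot v\<close> is a
  cyclic permutation of the neighbours of v (the clockwise successor).\<close>
definition rotation_system :: "'a set \<Rightarrow> ('a \<Rightarrow> 'a \<Rightarrow> bool) \<Rightarrow> ('a \<Rightarrow> 'a \<Rightarrow> 'a) \<Rightarrow> bool" where
  "rotation_system V adj rot \<longleftrightarrow>
     (\<forall>v\<in>V. bij_betw (rot v) (neighbors V adj v) (neighbors V adj v) \<and>
        (\<forall>u\<in>neighbors V adj v. \<forall>w\<in>neighbors V adj v. \<exists>n. (rot v ^^ n) u = w))"

definition face_step :: "('a \<Rightarrow> 'a \<Rightarrow> 'a) \<Rightarrow> 'a \<times> 'a \<Rightarrow> 'a \<times> 'a" where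
  "face_step rot d = (snd d, rot (snd d) (fst d))"

text \<open>b is the next leaf after leaf a in the cyclic order in which leaves appear
  along the boundary walk of the embedded tree.\<close>
definition next_leaf :: "'a set \<Rightarrow> ('a \<Rightarrow> 'a \<Rightarrow> bool) \<Rightarrow> ('a \<Rightarrow> 'a \<Rightarrow> 'a) \<Rightarrow> 'a \<Rightarrow> 'a \<Rightarrow> bool" where
  "next_leaf V adj rot a b \<longleftrightarrow> is_leaf V adj a \<and> is_leaf V adj b \<and>
     (\<exists>p. adj p a \<and> (\<exists>n>0. snd ((face_step rot ^^ n) (p, a)) = b \<and>
        (\<forall>m. 0 < m \<and> m < n \<longrightarrow> \<not> is_leaf V adj (snd ((face_step rot ^^ m) (p, a))))))"

definition gen_halin :: "'a set \<Rightarrow> ('a \<Rightarrow> 'a \<Rightarrow> bool) \<Rightarrow> ('a \<Rightarrow> 'a \<Rightarrow> 'a) \<Rightarrow> bool" where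
  "gen_halin V tadj rot \<longleftrightarrow> is_tree V tadj \<and> rotation_system V tadj rot \<and>
     max_degree V tadj \<ge> 3"

text \<open>Adjacency of H(T,C): tree edges plus the cycle C through the leaves.\<close>
definition halin_adj :: "'a set \<Rightarrow> ('a \<Rightarrow> 'a \<Rightarrow> bool) \<Rightarrow> ('a \<Rightarrow> 'a \<Rightarrow> 'a) \<Rightarrow> 'a \<Rightarrow> 'a \<Rightarrow> bool" where
  "halin_adj V tadj rot u v \<longleftrightarrow> u \<noteq> v \<and>
     (tadj u v \<or> next_leaf V tadj rot u v \<or> next_leaf V tadj rot v u)"

definition lazy_measure :: "'a set \<Rightarrow> ('a \<Rightarrow> 'a \<Rightarrow> bool) \<Rightarrow> real \<Rightarrow> 'a \<Rightarrow> 'a \<Rightarrow> real" where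
  "lazy_measure V adj \<alpha> v x =
     (if x = v then \<alpha> else if x \<in> V \<and> adj v x then (1 - \<alpha>) / real (degree V adj v) else 0)"

definition is_coupling :: "'a set \<Rightarrow> ('a \<Rightarrow> real) \<Rightarrow> ('a \<Rightarrow> real) \<Rightarrow> ('a \<Rightarrow> 'a \<Rightarrow> real) \<Rightarrow> bool" where
  "is_coupling V m1 m2 \<pi> \<longleftrightarrow> (\<forall>u\<in>V. \<forall>w\<in>V. \<pi> u w \<ge> 0) \<and>
     (\<forall>u\<in>V. (\<Sum>w\<in>V. \<pi> u w) = m1 u) \<and> (\<forall>w\<in>V. (\<Sum>u\<in>V. \<pi> u w) = m2 w)"

definition wasserstein :: "'a set \<Rightarrow> ('a \<Rightarrow> 'a \<Rightarrow> bool) \<Rightarrow> ('a \<Rightarrow> real) \<Rightarrow> ('a \<Rightarrow> real) \<Rightarrow> real" where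
  "wasserstein V adj m1 m2 =
     Inf {(\<Sum>u\<in>V. \<Sum>w\<in>V. \<pi> u w * real (gdist V adj u w)) | \<pi>. is_coupling V m1 m2 \<pi>}"

definition kappa_alpha :: "'a set \<Rightarrow> ('a \<Rightarrow> 'a \<Rightarrow> bool) \<Rightarrow> real \<Rightarrow> 'a \<Rightarrow> 'a \<Rightarrow> real" where
  "kappa_alpha V adj \<alpha> u v =
     1 - wasserstein V adj (lazy_measure V adj \<alpha> u) (lazy_measure V adj \<alpha> v)"

definition kappa_LLY :: "'a set \<Rightarrow> ('a \<Rightarrow> 'a \<Rightarrow> bool) \<Rightarrow> 'a \<Rightarrow> 'a \<Rightarrow> real" where
  "kappa_LLY V adj u v = Lim (at_left 1) (\<lambda>\<alpha>. kappa_alpha V adj \<alpha> u v / (1 - \<alpha>))"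

end

(* Suppose some leaf y has d_T(x, y) >= 3, and let x a b c be the start of a geodesic from
   x to y. Distinct neighbours of x lead to distinct leaves, and T has only D(T) = deg x
   leaves, so no vertex other than x has degree 3 or more; in particular a and b have
   degree 2 in T and, not being leaves, also in H = H(T, C). In H every neighbour z <> a of
   x is at distance at least 2 from b, and at distance exactly 2 only if z is one of the at
   most two cycle neighbours of c; as x has at least three such neighbours, one of them is at
   distance at least 3. Hence the 1-Lipschitz function d_H(-, b) has mean at least 2 under
   the lazy measure at x and mean 1 under the one at a, so W >= 1 and kappa_alpha(x, a) <= 0
   for every alpha < 1. Since kappa_alpha / (1 - alpha) is monotone in alpha, the limit
   kappa_LLY(x, a) exists and is <= 0, contradicting positive curvature. *)

theory Submission
  imports Defs
begin

section \<open>Walks and shortest-path distance\<close>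

lemma is_walk_Cons:
  "is_walk V G (u # xs) \<longleftrightarrow> u \<in> V \<and> (xs = [] \<or> G u (hd xs) \<and> is_walk V G xs)"
proof (cases xs)
  case (Cons w ws)
  then show ?thesis
    unfolding is_walk_def by (auto simp: All_less_Suc2)
qed (simp add: is_walk_def)

lemma is_walk_take: "is_walk V G xs \<Longrightarrow> 0 < k \<Longrightarrow> is_walk V G (take k xs)"
  by (auto simp: is_walk_def dest: in_set_takeD)

lemma is_walk_drop: "is_walk V G xs \<Longrightarrow> k < length xs \<Longrightarrow> is_walk V G (drop k xs)"
  by (auto simp: is_walk_def dest: in_set_dropD)

lemma is_walk_mono: "is_walk V G xs \<Longrightarrow> (\<And>u v. G u v \<Longrightarrow> G' u v) \<Longrightarrow> is_walk V G' xs"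
  by (auto simp: is_walk_def)

lemma is_walk_append_tl:
  "is_walk V G xs \<Longrightarrow> is_walk V G ys \<Longrightarrow> last xs = hd ys \<Longrightarrow> is_walk V G (xs @ tl ys)"
proof (induction xs)
  case (Cons u xs)
  show ?case
  proof (cases xs)
    case Nil
    then show ?thesis using Cons.prems by (cases ys) (auto simp: is_walk_Cons)
  qed (use Cons in \<open>auto simp: is_walk_Cons\<close>)
qed (simp add: is_walk_def)

lemma gdist_less_length:
  assumes "is_walk V G xs" "hd xs = u" "last xs = v"
  shows "gdist V G u v < length xs"
proof -
  have len: "length xs = Suc (length xs - 1)"
    using assms(1) by (cases xs) (auto simp: is_walk_def)
  then have "gdist V G u v \<le> length xs - 1"
    unfolding gdist_def using assms by (intro Least_le) blast
  then show ?thesis using len by linarith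
qed

lemma obtain_shortest_walk:
  assumes "connected_graph V G" "u \<in> V" "v \<in> V"
  obtains xs where "is_walk V G xs" "hd xs = u" "last xs = v"
    "length xs = Suc (gdist V G u v)"
proof -
  obtain xs where "is_walk V G xs" "hd xs = u" "last xs = v"
    using assms unfolding connected_graph_def by blast
  moreover have "length xs = Suc (length xs - 1)"
    using \<open>is_walk V G xs\<close> by (cases xs) (auto simp: is_walk_def)
  ultimately have "\<exists>n xs. is_walk V G xs \<and> hd xs = u \<and> last xs = v \<and> length xs = Suc n"
    by blast
  then have "\<exists>xs. is_walk V G xs \<and> hd xs = u \<and> last xs = v \<and> length xs = Suc (gdist V G u v)"
    unfolding gdist_def by (rule LeastI_ex)
  then show ?thesis using that by blast
qed

lemma gdist_self: "u \<in> V \<Longrightarrow> gdist V G u u = 0"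
  using gdist_less_length[of V G "[u]"] by (simp add: is_walk_def)

lemma gdist_eq_0_iff:
  assumes "connected_graph V G" "u \<in> V" "v \<in> V"
  shows "gdist V G u v = 0 \<longleftrightarrow> u = v"
proof
  assume "gdist V G u v = 0"
  moreover obtain xs where "hd xs = u" "last xs = v" "length xs = Suc (gdist V G u v)"
    using obtain_shortest_walk[OF assms] by blast
  ultimately show "u = v" by (cases xs) auto
qed (use assms(2) gdist_self in simp)

lemma gdist_triangle:
  assumes conn: "connected_graph V G" and "u \<in> V" "v \<in> V" "w \<in> V"
  shows "gdist V G u w \<le> gdist V G u v + gdist V G v w"
proof -
  obtain xs where xs: "is_walk V G xs" "hd xs = u" "last xs = v" "length xs = Suc (gdist V G u v)"
    using obtain_shortest_walk[OF conn assms(2,3)] .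
  obtain ys where ys: "is_walk V G ys" "hd ys = v" "last ys = w" "length ys = Suc (gdist V G v w)"
    using obtain_shortest_walk[OF conn assms(3,4)] .
  have "is_walk V G (xs @ tl ys)" using is_walk_append_tl xs ys by metis
  moreover have "xs \<noteq> []" "ys \<noteq> []" using xs ys by (auto simp: is_walk_def)
  then have "hd (xs @ tl ys) = u" "last (xs @ tl ys) = w"
    using xs ys by (simp, cases ys, auto)
  ultimately have "gdist V G u w < length (xs @ tl ys)" by (rule gdist_less_length)
  then show ?thesis using xs ys by simp
qed

lemma gdist_adjacent:
  assumes "simple_graph V G" "connected_graph V G" "G u v"
  shows "gdist V G u v = 1"
proof -
  have uv: "u \<in> V" "v \<in> V" "u \<noteq> v" using assms by (auto simp: simple_graph_def)
  then have "gdist V G u v < 2"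
    using gdist_less_length[of V G "[u, v]" u v] assms(3) by (simp add: is_walk_Cons)
  moreover have "gdist V G u v \<noteq> 0" using gdist_eq_0_iff[OF assms(2)] uv by simp
  ultimately show ?thesis by linarith
qed

lemma gdist_le_SucD:
  assumes conn: "connected_graph V G" and "u \<in> V" "v \<in> V" "gdist V G u v \<le> Suc n"
  shows "u = v \<or> (\<exists>w. G u w \<and> w \<in> V \<and> gdist V G w v \<le> n)"
proof -
  obtain xs where xs: "is_walk V G xs" "hd xs = u" "last xs = v" "length xs = Suc (gdist V G u v)"
    using obtain_shortest_walk[OF conn assms(2,3)] .
  show ?thesis
  proof (cases xs)
    case Nil then show ?thesis using xs by simp
  next
    case (Cons u' ws)
    show ?thesis
    proof (cases ws)
      case Nil then show ?thesis using xs Cons by simp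
    next
      case (Cons w ws')
      have "G u w" "w \<in> V" "is_walk V G ws"
        using xs \<open>xs = u' # ws\<close> Cons by (auto simp: is_walk_Cons)
      moreover have "gdist V G w v < length ws"
        using gdist_less_length[OF \<open>is_walk V G ws\<close>] xs \<open>xs = u' # ws\<close> Cons by simp
      moreover have "length ws = gdist V G u v" using xs(4) \<open>xs = u' # ws\<close> by simp
      ultimately show ?thesis using assms(4) by (intro disjI2 exI[of _ w]) simp
    qed
  qed
qed

lemma gdist_le_1_iff:
  assumes "connected_graph V G" "u \<in> V" "v \<in> V"
  shows "gdist V G u v \<le> 1 \<longleftrightarrow> u = v \<or> G u v"
proof
  assume "gdist V G u v \<le> 1"
  then show "u = v \<or> G u v"
    using gdist_le_SucD[OF assms, of 0] gdist_eq_0_iff[OF assms(1) _ assms(3)] by auto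
next
  assume "u = v \<or> G u v"
  then show "gdist V G u v \<le> 1"
    using assms(2,3) gdist_self[of u V G] gdist_less_length[of V G "[u, v]" u v]
    by (auto simp: is_walk_Cons)
qed

lemma gdist_eq_2:
  assumes "simple_graph V G" "connected_graph V G" "G u w" "G w v" "u \<noteq> v" "\<not> G u v"
  shows "gdist V G u v = 2"
proof -
  have V: "u \<in> V" "w \<in> V" "v \<in> V" using assms(1,3,4) by (auto simp: simple_graph_def)
  have "gdist V G u v \<le> 2"
    using gdist_triangle[OF assms(2) V] gdist_adjacent[OF assms(1,2)] assms(3,4) by simp
  moreover have "\<not> gdist V G u v \<le> 1" using gdist_le_1_iff[OF assms(2) V(1,3)] assms(5,6) by blast
  ultimately show ?thesis by simp
qed

lemma gdist_le_2_imp: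
  assumes "connected_graph V G" "u \<in> V" "v \<in> V" "gdist V G u v \<le> 2"
  shows "u = v \<or> G u v \<or> (\<exists>w. G u w \<and> G w v)"
  using gdist_le_SucD[OF assms(1-3), of 1] gdist_le_1_iff[OF assms(1) _ assms(3)] assms(4) by auto

lemma gdist_nth_shortest_walk:
  assumes conn: "connected_graph V G"
    and xs: "is_walk V G xs" "hd xs = u" "last xs = v" "length xs = Suc (gdist V G u v)"
    and i: "i < length xs"
  shows "gdist V G u (xs ! i) = i"
proof -
  have ne: "xs \<noteq> []" using i by auto
  have in_V: "u \<in> V" "v \<in> V" "xs ! i \<in> V"
    using xs ne i by (auto simp: is_walk_def dest: hd_in_set last_in_set)
  have "last (take (Suc i) xs) = xs ! i" using i by (simp add: take_Suc_conv_app_nth)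
  then have "gdist V G u (xs ! i) < Suc i"
    using gdist_less_length[OF is_walk_take[OF xs(1), of "Suc i"]] xs(2) i by simp
  moreover have "gdist V G (xs ! i) v < length xs - i"
    using gdist_less_length[OF is_walk_drop[OF xs(1) i]] xs(3) i by (simp add: hd_drop_conv_nth)
  moreover have "gdist V G u v \<le> gdist V G u (xs ! i) + gdist V G (xs ! i) v"
    using gdist_triangle[OF conn in_V(1,3,2)] .
  ultimately show ?thesis using xs(4) by linarith
qed

lemma gdist_ge_3_obtain_path:
  assumes conn: "connected_graph V G" and "u \<in> V" "v \<in> V" "3 \<le> gdist V G u v"
  obtains a b c where "G u a" "G a b" "G b c" "gdist V G u b = 2" "gdist V G u c = 3"
proof -
  obtain xs where xs: "is_walk V G xs" "hd xs = u" "last xs = v" "length xs = Suc (gdist V G u v)"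
    using obtain_shortest_walk[OF conn assms(2,3)] .
  have len: "3 < length xs" using xs(4) assms(4) by linarith
  have adj: "G (xs ! i) (xs ! Suc i)" if "i < 3" for i
    using xs(1) len that by (simp add: is_walk_def)
  have "xs ! 0 = u" using xs(2) len by (cases xs) auto
  have dist: "gdist V G u (xs ! i) = i" if "i \<le> 3" for i
    using gdist_nth_shortest_walk[OF conn xs] len that by simp
  show ?thesis
  proof (rule that)
    show "G u (xs ! 1)" using adj[of 0] \<open>xs ! 0 = u\<close> by simp
    show "G (xs ! 1) (xs ! 2)" using adj[of 1] by (simp add: numeral_2_eq_2)
    show "G (xs ! 2) (xs ! 3)" using adj[of 2] by (simp add: numeral_3_eq_3)
  qed (use dist[of 2] dist[of 3] in simp_all)
qed


section \<open>Non-backtracking walks in forests\<close>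

definition forest :: "'a set \<Rightarrow> ('a \<Rightarrow> 'a \<Rightarrow> bool) \<Rightarrow> bool" where
  "forest V E \<longleftrightarrow> simple_graph V E \<and> (\<nexists>xs. is_cycle V E xs)"

lemma is_tree_imp_forest: "is_tree V E \<Longrightarrow> forest V E"
  by (simp add: is_tree_def forest_def)

fun nonbacktracking :: "('a \<Rightarrow> 'a \<Rightarrow> bool) \<Rightarrow> 'a list \<Rightarrow> bool" where
  "nonbacktracking E (u # v # w # xs) \<longleftrightarrow> E u v \<and> u \<noteq> w \<and> nonbacktracking E (v # w # xs)"
| "nonbacktracking E [u, v] \<longleftrightarrow> E u v"
| "nonbacktracking E [u] \<longleftrightarrow> True"
| "nonbacktracking E [] \<longleftrightarrow> True"

lemma nonbacktracking_Cons:
  "nonbacktracking E (u # xs) \<longleftrightarrow>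
     nonbacktracking E xs \<and> (xs \<noteq> [] \<longrightarrow> E u (hd xs)) \<and> (2 \<le> length xs \<longrightarrow> u \<noteq> xs ! 1)"
  by (cases xs; cases "tl xs") auto

lemma nonbacktracking_snoc:
  "nonbacktracking E (xs @ [w]) \<longleftrightarrow>
     nonbacktracking E xs \<and> (xs \<noteq> [] \<longrightarrow> E (last xs) w) \<and>
     (2 \<le> length xs \<longrightarrow> xs ! (length xs - 2) \<noteq> w)"
proof (induction xs)
  case (Cons u xs)
  show ?case
  proof (cases xs)
    case (Cons v ys)
    then show ?thesis using Cons.IH by (cases ys) (auto simp: nonbacktracking_Cons nth_append)
  qed simp
qed simp

lemma nonbacktracking_appendD1: "nonbacktracking E (xs @ ys) \<Longrightarrow> nonbacktracking E xs"
proof (induction ys rule: rev_induct)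
  case (snoc y ys)
  then show ?case using nonbacktracking_snoc[of E "xs @ ys" y] by simp
qed simp

lemma nonbacktracking_appendD2: "nonbacktracking E (xs @ ys) \<Longrightarrow> nonbacktracking E ys"
  by (induction xs) (auto simp: nonbacktracking_Cons)

lemma nonbacktracking_is_walk:
  assumes "simple_graph V E"
  shows "nonbacktracking E xs \<Longrightarrow> 2 \<le> length xs \<Longrightarrow> is_walk V E xs"
proof (induction xs)
  case (Cons u xs)
  then obtain w ws where xs: "xs = w # ws" and "E u w"
    by (cases xs) (auto simp: nonbacktracking_Cons)
  then have "u \<in> V" "w \<in> V" using assms by (auto simp: simple_graph_def)
  then show ?case
    using Cons xs \<open>E u w\<close> by (cases ws) (auto simp: is_walk_Cons nonbacktracking_Cons)
qed simp

lemma nonbacktracking_distinct: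
  assumes "forest V E"
  shows "nonbacktracking E xs \<Longrightarrow> distinct xs"
proof (induction xs)
  case (Cons u ys)
  have "distinct ys" using Cons by (simp add: nonbacktracking_Cons)
  moreover have "u \<notin> set ys"
  proof
    assume "u \<in> set ys"
    then obtain us vs where ys: "ys = us @ u # vs" and "u \<notin> set us"
      by (metis split_list_first)
    have "nonbacktracking E ((u # us) @ [u])"
      using Cons.prems ys nonbacktracking_appendD1[of E "(u # us) @ [u]" vs] by simp
    then have walk: "nonbacktracking E (u # us)" and closing: "E (last (u # us)) u"
      and no_return: "2 \<le> length (u # us) \<Longrightarrow> (u # us) ! (length us - 1) \<noteq> u"
      using nonbacktracking_snoc[of E "u # us" u] by auto
    have sg: "simple_graph V E" using assms by (simp add: forest_def)
    have "us \<noteq> []" using closing sg unfolding simple_graph_def by force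
    moreover have "length us \<noteq> 1"
      using no_return by (cases us) auto
    ultimately have "2 \<le> length us" by (cases us) (auto simp: Suc_le_eq)
    then have len: "3 \<le> length (u # us)" by simp
    have "distinct (u # us)" using \<open>distinct ys\<close> ys \<open>u \<notin> set us\<close> by simp
    moreover have "is_walk V E (u # us)"
      using nonbacktracking_is_walk[OF sg walk] len by simp
    ultimately have "is_cycle V E (u # us)" using len closing by (simp add: is_cycle_def)
    then show False using assms by (simp add: forest_def)
  qed
  ultimately show ?case by simp
qed simp

lemma nonbacktracking_rev_append:
  assumes sym: "\<And>u v. E u v \<Longrightarrow> E v u"
  shows "nonbacktracking E (c # P) \<Longrightarrow> nonbacktracking E (c # Q) \<Longrightarrow> P \<noteq> [] \<Longrightarrow> Q \<noteq> [] \<Longrightarrow>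
    hd P \<noteq> hd Q \<Longrightarrow> nonbacktracking E (rev P @ c # Q)"
proof (induction P arbitrary: c Q)
  case (Cons p P)
  obtain q Q' where Q: "Q = q # Q'" using Cons.prems(4) by (cases Q) auto
  have "E c p" using Cons.prems(1) by (cases P) auto
  then have pcQ: "nonbacktracking E (p # c # Q)" using Cons.prems(2,5) sym Q by auto
  show ?case
  proof (cases P)
    case Nil
    then show ?thesis using pcQ by simp
  next
    case (Cons p' P')
    then have "nonbacktracking E (p # P)" "p' \<noteq> c" using Cons.prems(1) by auto
    then show ?thesis using Cons.IH[of p "c # Q"] pcQ \<open>P = p' # P'\<close> by auto
  qed
qed simp

text \<open>Glued together at \<open>c\<close>, the two walks form one non-backtracking walk, hence a path.\<close>
lemma nonbacktracking_last_neq: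
  assumes "forest V E"
    and "nonbacktracking E (c # P)" "nonbacktracking E (c # Q)" "P \<noteq> []" "Q \<noteq> []"
    and "hd P \<noteq> hd Q"
  shows "last P \<noteq> last Q"
proof -
  have "\<And>u v. E u v \<Longrightarrow> E v u" using assms(1) by (auto simp: forest_def simple_graph_def)
  then have "nonbacktracking E (rev P @ c # Q)"
    using nonbacktracking_rev_append assms(2-6) by metis
  then have "distinct (rev P @ c # Q)" by (rule nonbacktracking_distinct[OF assms(1)])
  then show ?thesis using assms(4,5) by (metis disjoint_iff distinct_append last_in_set list.set_intros(2) set_rev)
qed

lemma nonbacktracking_length_le_card:
  assumes forest: "forest V E" and walk: "nonbacktracking E xs" "2 \<le> length xs"
  shows "length xs \<le> card V"
proof -
  have sg: "simple_graph V E" using forest by (simp add: forest_def)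
  have "distinct xs" "set xs \<subseteq> V"
    using nonbacktracking_distinct[OF forest walk(1)] nonbacktracking_is_walk[OF sg walk]
    by (auto simp: is_walk_def)
  then show ?thesis using sg by (metis card_mono distinct_card simple_graph_def)
qed

lemma obtain_other_neighbor:
  assumes "simple_graph V E" "E p v" "\<not> is_leaf V E v"
  obtains w where "E v w" "w \<noteq> p"
proof -
  have "v \<in> V" "p \<in> neighbors V E v"
    using assms(1,2) by (auto simp: simple_graph_def neighbors_def)
  moreover have "neighbors V E v \<noteq> {p}" using assms(3) \<open>v \<in> V\<close> by (auto simp: is_leaf_def degree_def)
  ultimately obtain w where "w \<in> neighbors V E v" "w \<noteq> p" by blast
  then show ?thesis using that unfolding neighbors_def by blast
qed

lemma nonbacktracking_extend_to_leaf:
  assumes forest: "forest V E" and "nonbacktracking E xs" "2 \<le> length xs"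
  obtains ys where "nonbacktracking E (xs @ ys)" "is_leaf V E (last (xs @ ys))"
proof -
  have sg: "simple_graph V E" using forest by (simp add: forest_def)
  have "\<exists>ys. nonbacktracking E (xs @ ys) \<and> is_leaf V E (last (xs @ ys))"
    using assms(2,3)
  proof (induction "card V - length xs" arbitrary: xs rule: less_induct)
    case less
    define zs p v where "zs = butlast (butlast xs)" and "p = last (butlast xs)" and "v = last xs"
    have "xs \<noteq> []" "butlast xs \<noteq> []" using less.prems(2) by (cases xs; auto)+
    then have xs: "xs = zs @ [p, v]"
      unfolding zs_def p_def v_def by (metis append_butlast_last_id append_Cons append_assoc append_Nil)
    show ?case
    proof (cases "is_leaf V E v")
      case True
      then show ?thesis using xs less.prems(1) by (intro exI[of _ "[]"]) simp
    next
      case False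
      have "E p v" using less.prems(1) xs nonbacktracking_snoc[of E "zs @ [p]" v] by simp
      then obtain w where w: "E v w" "w \<noteq> p" using False by (rule obtain_other_neighbor[OF sg])
      have walk': "nonbacktracking E (xs @ [w])"
        using less.prems(1) w \<open>E p v\<close> xs nonbacktracking_snoc[of E xs w] by (simp add: nth_append)
      then have "card V - length (xs @ [w]) < card V - length xs"
        using nonbacktracking_length_le_card[OF forest walk'] less.prems(2) by simp
      then obtain ys where "nonbacktracking E ((xs @ [w]) @ ys)" "is_leaf V E (last ((xs @ [w]) @ ys))"
        using less.hyps walk' less.prems(2) by fastforce
      then show ?thesis by (intro exI[of _ "w # ys"]) simp
    qed
  qed
  then show ?thesis using that by blast
qed


section \<open>Trees with few leaves\<close>

definition reaches_via :: "('a \<Rightarrow> 'a \<Rightarrow> bool) \<Rightarrow> 'a \<Rightarrow> 'a \<Rightarrow> 'a \<Rightarrow> bool" where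
  "reaches_via E x z l \<longleftrightarrow> (\<exists>ys. nonbacktracking E (x # z # ys) \<and> last (z # ys) = l)"

lemma reaches_via_unique:
  "forest V E \<Longrightarrow> reaches_via E x z1 l \<Longrightarrow> reaches_via E x z2 l \<Longrightarrow> z1 = z2"
  unfolding reaches_via_def by (metis list.distinct(1) list.sel(1) nonbacktracking_last_neq)

lemma reaches_via_leaf:
  assumes "forest V E" "E x z"
  obtains l where "is_leaf V E l" "reaches_via E x z l"
proof -
  obtain ys where "nonbacktracking E ([x, z] @ ys)" "is_leaf V E (last ([x, z] @ ys))"
    using nonbacktracking_extend_to_leaf[OF assms(1), of "[x, z]"] assms(2) by auto
  then show ?thesis using that unfolding reaches_via_def by auto
qed

lemma reaches_via_leaf_beyond:
  assumes forest: "forest V E" and walk: "nonbacktracking E (x # P @ [w])" and "P \<noteq> []"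
  obtains l where "is_leaf V E l" "reaches_via E x (hd P) l" "reaches_via E (last P) w l"
proof -
  obtain ys where ys: "nonbacktracking E ((x # P @ [w]) @ ys)" "is_leaf V E (last ((x # P @ [w]) @ ys))"
    using nonbacktracking_extend_to_leaf[OF forest walk] \<open>P \<noteq> []\<close> by auto
  have "(x # P @ [w]) @ ys = x # hd P # (tl P @ w # ys)" using \<open>P \<noteq> []\<close> by simp
  then have "nonbacktracking E (x # hd P # (tl P @ w # ys))" using ys(1) by argo
  then have "reaches_via E x (hd P) (last (w # ys))"
    unfolding reaches_via_def by (intro exI[of _ "tl P @ w # ys"]) simp
  moreover have "(x # P @ [w]) @ ys = (x # butlast P) @ last P # w # ys" using \<open>P \<noteq> []\<close> by simp
  then have "nonbacktracking E (last P # w # ys)"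
    using ys(1) nonbacktracking_appendD2[of E "x # butlast P" "last P # w # ys"] by argo
  then have "reaches_via E (last P) w (last (w # ys))" unfolding reaches_via_def by blast
  moreover have "is_leaf V E (last (w # ys))" using ys(2) by simp
  ultimately show ?thesis using that by blast
qed

lemma two_leaves_beyond:
  assumes forest: "forest V E" and walk: "nonbacktracking E (x # P)" "P \<noteq> []"
    and deg: "3 \<le> degree V E (last P)"
  obtains l1 l2 where "l1 \<noteq> l2" "is_leaf V E l1" "is_leaf V E l2"
    "reaches_via E x (hd P) l1" "reaches_via E x (hd P) l2"
proof -
  have sg: "simple_graph V E" using forest by (simp add: forest_def)
  define v where "v = last P"
  define u where "u = (x # P) ! (length P - 1)"
  have "is_walk V E (x # P)"
    using nonbacktracking_is_walk[OF sg walk(1)] walk(2) by (simp add: Suc_le_eq)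
  moreover have "Suc (length P - 1) < length (x # P)" using walk(2) by simp
  ultimately have "E u ((x # P) ! Suc (length P - 1))" unfolding is_walk_def u_def by blast
  moreover have "(x # P) ! Suc (length P - 1) = v"
    using walk(2) by (cases P rule: rev_cases) (auto simp: v_def nth_append)
  ultimately have "E u v" by simp
  then have "u \<in> neighbors V E v" and fin: "finite (neighbors V E v - {u})"
    using sg by (auto simp: simple_graph_def neighbors_def)
  then have "\<not> card (neighbors V E v - {u}) \<le> Suc 0"
    using deg by (simp add: v_def degree_def)
  then obtain w1 w2 where w: "w1 \<noteq> w2" "w1 \<in> neighbors V E v - {u}" "w2 \<in> neighbors V E v - {u}"
    using card_le_Suc0_iff_eq[OF fin] by blast
  have walk_w: "nonbacktracking E (x # P @ [w])" if "w \<in> neighbors V E v - {u}" for w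
    using walk that nonbacktracking_snoc[of E "x # P" w] by (auto simp: neighbors_def u_def v_def)
  obtain l1 where "is_leaf V E l1" "reaches_via E x (hd P) l1" "reaches_via E v w1 l1"
    using reaches_via_leaf_beyond[OF forest walk_w[OF w(2)] walk(2)] by (auto simp: v_def)
  moreover obtain l2 where "is_leaf V E l2" "reaches_via E x (hd P) l2" "reaches_via E v w2 l2"
    using reaches_via_leaf_beyond[OF forest walk_w[OF w(3)] walk(2)] by (auto simp: v_def)
  moreover have "l1 \<noteq> l2" using reaches_via_unique[OF forest] w(1) calculation by blast
  ultimately show ?thesis using that by blast
qed

lemma adj_iff_mem_neighbors: "simple_graph V E \<Longrightarrow> E u v \<longleftrightarrow> v \<in> neighbors V E u"
  by (auto simp: simple_graph_def neighbors_def)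

lemma neighbors_eq_if_degree_le_2:
  assumes "simple_graph V E" "E v u" "E v w" "u \<noteq> w" "degree V E v \<le> 2"
  shows "neighbors V E v = {u, w}"
proof -
  have "{u, w} \<subseteq> neighbors V E v" "finite (neighbors V E v)"
    using assms by (auto simp: simple_graph_def neighbors_def)
  moreover have "card (neighbors V E v) \<le> card {u, w}" using assms(4,5) by (simp add: degree_def)
  ultimately show ?thesis using card_seteq by blast
qed

lemma leaves_off_branch:
  assumes forest: "forest V E" and xa: "E x a"
  obtains L where "L \<subseteq> {v \<in> V. is_leaf V E v}" "card L + 1 = degree V E x"
    "\<And>l. l \<in> L \<Longrightarrow> \<not> reaches_via E x a l"
proof -
  have sg: "simple_graph V E" using forest by (simp add: forest_def)
  define Z where "Z = neighbors V E x - {a}"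
  have "\<exists>l. is_leaf V E l \<and> reaches_via E x z l" if "z \<in> Z" for z
  proof -
    have "E x z" using that by (simp add: Z_def neighbors_def)
    then obtain l where "is_leaf V E l" "reaches_via E x z l" by (rule reaches_via_leaf[OF forest])
    then show ?thesis by blast
  qed
  then obtain leaf where leaf: "\<forall>z\<in>Z. is_leaf V E (leaf z) \<and> reaches_via E x z (leaf z)"
    by metis
  have inj: "inj_on leaf Z"
  proof (rule inj_onI)
    fix z1 z2 assume "z1 \<in> Z" "z2 \<in> Z" "leaf z1 = leaf z2"
    then have "reaches_via E x z1 (leaf z1)" "reaches_via E x z2 (leaf z1)" using leaf by auto
    then show "z1 = z2" by (rule reaches_via_unique[OF forest])
  qed
  have "a \<in> neighbors V E x" "finite (neighbors V E x)"
    using sg xa by (auto simp: simple_graph_def neighbors_def)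
  then have "card Z + 1 = degree V E x"
    using card_gt_0_iff[of "neighbors V E x"] by (auto simp: Z_def degree_def)
  show ?thesis
  proof (rule that[of "leaf ` Z"])
    show "leaf ` Z \<subseteq> {v \<in> V. is_leaf V E v}" using leaf by (auto simp: is_leaf_def)
    show "card (leaf ` Z) + 1 = degree V E x"
      using card_image[OF inj] \<open>card Z + 1 = degree V E x\<close> by simp
  next
    fix l assume "l \<in> leaf ` Z"
    then obtain z where "z \<in> Z" "reaches_via E x z l" using leaf by blast
    then show "\<not> reaches_via E x a l" using reaches_via_unique[OF forest] by (auto simp: Z_def)
  qed
qed

text \<open>Two leaves beyond a vertex of degree at least 3, together with one leaf in every other
  branch at \<open>x\<close>, would give \<open>deg x + 1\<close> leaves: the tree is a subdivided star centred at \<open>x\<close>.\<close>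
lemma degree_le_2_if_card_leaves_le_degree:
  assumes forest: "forest V E" and leaves: "card {v \<in> V. is_leaf V E v} \<le> degree V E x"
    and walk: "nonbacktracking E (x # P)" "P \<noteq> []"
  shows "degree V E (last P) \<le> 2"
proof (rule ccontr)
  assume "\<not> degree V E (last P) \<le> 2"
  then have "3 \<le> degree V E (last P)" by simp
  then obtain l1 l2 where l: "l1 \<noteq> l2" "is_leaf V E l1" "is_leaf V E l2"
    "reaches_via E x (hd P) l1" "reaches_via E x (hd P) l2"
    by (rule two_leaves_beyond[OF forest walk])
  have "E x (hd P)" using walk by (cases P) (auto simp: nonbacktracking_Cons)
  then obtain L where L: "L \<subseteq> {v \<in> V. is_leaf V E v}" "card L + 1 = degree V E x"
      "\<And>l. l \<in> L \<Longrightarrow> \<not> reaches_via E x (hd P) l"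
    by (rule leaves_off_branch[OF forest]) blast
  have fin: "finite {v \<in> V. is_leaf V E v}" using forest by (simp add: forest_def simple_graph_def)
  have "insert l1 (insert l2 L) \<subseteq> {v \<in> V. is_leaf V E v}" using L(1) l by (auto simp: is_leaf_def)
  then have "card (insert l1 (insert l2 L)) \<le> degree V E x"
    using card_mono[OF fin] leaves by (meson order_trans)
  moreover have "l1 \<notin> L" "l2 \<notin> L" using l(4,5) L(3) by blast+
  then have "card (insert l1 (insert l2 L)) = card L + 2"
    using l(1) finite_subset[OF L(1) fin] by simp
  ultimately show False using L(2) by linarith
qed

lemma path_inner_neighbors_if_card_leaves_le_degree:
  assumes forest: "forest V E" and leaves: "card {v \<in> V. is_leaf V E v} \<le> degree V E x"
    and path: "E x a" "E a b" "E b c" "x \<noteq> b" "a \<noteq> c"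
  shows "neighbors V E a = {x, b}" and "neighbors V E b = {a, c}"
proof -
  have sg: "simple_graph V E" using forest by (simp add: forest_def)
  have "degree V E a \<le> 2"
    using degree_le_2_if_card_leaves_le_degree[OF forest leaves, of "[a]"] path(1) by simp
  moreover have "degree V E b \<le> 2"
    using degree_le_2_if_card_leaves_le_degree[OF forest leaves, of "[a, b]"] path(1,2,4) by simp
  moreover have "E a x" "E b a" using path(1,2) sg by (auto simp: simple_graph_def)
  ultimately show "neighbors V E a = {x, b}" "neighbors V E b = {a, c}"
    using neighbors_eq_if_degree_le_2[OF sg] path by auto
qed

section \<open>Lin-Lu-Yau curvature\<close>

definition transport_cost :: "'a set \<Rightarrow> ('a \<Rightarrow> 'a \<Rightarrow> bool) \<Rightarrow> ('a \<Rightarrow> 'a \<Rightarrow> real) \<Rightarrow> real" where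
  "transport_cost V G \<pi> = (\<Sum>u\<in>V. \<Sum>w\<in>V. \<pi> u w * real (gdist V G u w))"

lemma wasserstein_eq_Inf_transport_cost:
  "wasserstein V G m1 m2 = Inf (transport_cost V G ` {\<pi>. is_coupling V m1 m2 \<pi>})"
  unfolding wasserstein_def transport_cost_def by (rule arg_cong[where f = Inf]) blast

lemma transport_cost_nonneg: "is_coupling V m1 m2 \<pi> \<Longrightarrow> 0 \<le> transport_cost V G \<pi>"
  unfolding transport_cost_def is_coupling_def by (auto intro!: sum_nonneg)

lemma bdd_below_transport_cost: "bdd_below (transport_cost V G ` {\<pi>. is_coupling V m1 m2 \<pi>})"
  by (rule bdd_belowI[of _ 0]) (auto intro: transport_cost_nonneg)

text \<open>The easy half of Kantorovich duality.\<close>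
lemma transport_cost_ge_Lipschitz:
  assumes \<pi>: "is_coupling V m1 m2 \<pi>" and "finite V"
    and lip: "\<And>u w. u \<in> V \<Longrightarrow> w \<in> V \<Longrightarrow> f u - f w \<le> real (gdist V G u w)"
  shows "(\<Sum>u\<in>V. m1 u * f u) - (\<Sum>w\<in>V. m2 w * f w) \<le> transport_cost V G \<pi>"
proof -
  have "(\<Sum>u\<in>V. m1 u * f u) = (\<Sum>u\<in>V. \<Sum>w\<in>V. \<pi> u w * f u)"
    using \<pi> by (auto simp: is_coupling_def sum_distrib_right[symmetric] intro!: sum.cong)
  moreover have "(\<Sum>w\<in>V. m2 w * f w) = (\<Sum>u\<in>V. \<Sum>w\<in>V. \<pi> u w * f w)"
    using \<pi> by (subst sum.swap) (auto simp: is_coupling_def sum_distrib_right[symmetric] intro!: sum.cong)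
  ultimately have "(\<Sum>u\<in>V. m1 u * f u) - (\<Sum>w\<in>V. m2 w * f w) = (\<Sum>u\<in>V. \<Sum>w\<in>V. \<pi> u w * (f u - f w))"
    by (simp add: sum_subtractf[symmetric] algebra_simps)
  also have "\<dots> \<le> transport_cost V G \<pi>"
    unfolding transport_cost_def using \<pi> lip
    unfolding is_coupling_def by (intro sum_mono mult_left_mono) auto
  finally show ?thesis .
qed

lemma wasserstein_ge_Lipschitz:
  assumes "finite V" "is_coupling V m1 m2 \<pi>"
    and "\<And>u w. u \<in> V \<Longrightarrow> w \<in> V \<Longrightarrow> f u - f w \<le> real (gdist V G u w)"
  shows "(\<Sum>u\<in>V. m1 u * f u) - (\<Sum>w\<in>V. m2 w * f w) \<le> wasserstein V G m1 m2"
  unfolding wasserstein_eq_Inf_transport_cost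
  using assms by (intro cInf_greatest) (auto intro: transport_cost_ge_Lipschitz)

lemma is_coupling_product:
  assumes "\<forall>u\<in>V. 0 \<le> m1 u" "\<forall>u\<in>V. 0 \<le> m2 u" "sum m1 V = 1" "sum m2 V = 1"
  shows "is_coupling V m1 m2 (\<lambda>u w. m1 u * m2 w)"
  using assms by (simp add: is_coupling_def sum_distrib_left[symmetric] sum_distrib_right[symmetric])

lemma sum_lazy_measure:
  assumes "simple_graph V G" "v \<in> V"
  shows "(\<Sum>u\<in>V. lazy_measure V G \<alpha> v u * f u) =
    \<alpha> * f v + (1 - \<alpha>) / real (degree V G v) * (\<Sum>u\<in>neighbors V G v. f u)"
proof -
  let ?c = "(1 - \<alpha>) / real (degree V G v)"
  have fin: "finite V" and irr: "\<not> G v v" using assms by (auto simp: simple_graph_def)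
  have "(\<Sum>u\<in>V. lazy_measure V G \<alpha> v u * f u) =
      (\<Sum>u\<in>V. (if u = v then \<alpha> * f v else 0) + (if G v u then ?c * f u else 0))"
    using irr by (intro sum.cong) (auto simp: lazy_measure_def)
  also have "\<dots> = (\<Sum>u\<in>V. if u = v then \<alpha> * f v else 0) + (\<Sum>u\<in>V. if G v u then ?c * f u else 0)"
    by (rule sum.distrib)
  also have "(\<Sum>u\<in>V. if u = v then \<alpha> * f v else 0) = \<alpha> * f v"
    using fin assms(2) by simp
  also have "(\<Sum>u\<in>V. if G v u then ?c * f u else 0) = (\<Sum>u\<in>neighbors V G v. ?c * f u)"
    unfolding neighbors_def by (rule sum.inter_filter[OF fin, symmetric])
  finally show ?thesis by (simp add: sum_distrib_left)
qed

lemma lazy_measure_nonneg: "0 \<le> \<alpha> \<Longrightarrow> \<alpha> \<le> 1 \<Longrightarrow> 0 \<le> lazy_measure V G \<alpha> v u"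
  by (simp add: lazy_measure_def)

lemma sum_lazy_measure_ge:
  assumes "simple_graph V G" "v \<in> V" "0 < degree V G v" "\<alpha> \<le> 1"
    and "c * real (degree V G v) \<le> (\<Sum>u\<in>neighbors V G v. f u)"
  shows "\<alpha> * f v + (1 - \<alpha>) * c \<le> (\<Sum>u\<in>V. lazy_measure V G \<alpha> v u * f u)"
proof -
  have "(1 - \<alpha>) * c = (1 - \<alpha>) / real (degree V G v) * (c * real (degree V G v))"
    using assms(3) by simp
  also have "\<dots> \<le> (1 - \<alpha>) / real (degree V G v) * (\<Sum>u\<in>neighbors V G v. f u)"
    using assms(3-5) by (intro mult_left_mono) auto
  finally show ?thesis using sum_lazy_measure[OF assms(1,2)] by simp
qed

lemma sum_lazy_measure_eq_1:
  assumes "simple_graph V G" "v \<in> V" "0 < degree V G v"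
  shows "sum (lazy_measure V G \<alpha> v) V = 1"
  using sum_lazy_measure[OF assms(1,2), of \<alpha> "\<lambda>_. 1"] assms(3) by (simp add: degree_def)

lemma ex_coupling_lazy_measure:
  assumes "simple_graph V G" "G x a" "0 \<le> \<alpha>" "\<alpha> \<le> 1"
  shows "\<exists>\<pi>. is_coupling V (lazy_measure V G \<alpha> x) (lazy_measure V G \<alpha> a) \<pi>"
proof -
  have "x \<in> V" "a \<in> V" "a \<in> neighbors V G x" "x \<in> neighbors V G a"
    using assms(1,2) by (auto simp: simple_graph_def neighbors_def)
  moreover have "finite (neighbors V G v)" for v
    using assms(1) by (simp add: simple_graph_def neighbors_def)
  ultimately have "0 < degree V G x" "0 < degree V G a"
    by (auto simp: degree_def card_gt_0_iff)
  then have "is_coupling V (lazy_measure V G \<alpha> x) (lazy_measure V G \<alpha> a)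
      (\<lambda>u w. lazy_measure V G \<alpha> x u * lazy_measure V G \<alpha> a w)"
    using sum_lazy_measure_eq_1[OF assms(1)] \<open>x \<in> V\<close> \<open>a \<in> V\<close>
    by (intro is_coupling_product) (simp_all add: lazy_measure_nonneg[OF assms(3,4)])
  then show ?thesis by blast
qed

lemma lazy_measure_mix:
  "lazy_measure V G (1 - t * (1 - \<alpha>)) v =
    (\<lambda>u. t * lazy_measure V G \<alpha> v u + (1 - t) * (if u = v then 1 else 0))"
  unfolding lazy_measure_def by (rule ext) (simp add: algebra_simps)

lemma is_coupling_convex:
  assumes "is_coupling V m1 m2 \<pi>" "is_coupling V n1 n2 \<rho>" "0 \<le> t" "t \<le> 1"
  shows "is_coupling V (\<lambda>u. t * m1 u + (1 - t) * n1 u) (\<lambda>w. t * m2 w + (1 - t) * n2 w)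
    (\<lambda>u w. t * \<pi> u w + (1 - t) * \<rho> u w)"
  using assms by (simp add: is_coupling_def sum.distrib sum_distrib_left[symmetric])

lemma transport_cost_convex:
  "transport_cost V G (\<lambda>u w. t * \<pi> u w + (1 - t) * \<rho> u w) =
    t * transport_cost V G \<pi> + (1 - t) * transport_cost V G \<rho>"
  by (simp add: transport_cost_def distrib_right sum.distrib sum_distrib_left mult.assoc)

lemma is_coupling_point_mass:
  assumes "finite V" "x \<in> V" "a \<in> V"
  shows "is_coupling V (\<lambda>u. if u = x then 1 else 0) (\<lambda>w. if w = a then 1 else 0)
    (\<lambda>u w. if u = x \<and> w = a then 1 else 0)"
  using assms by (auto simp: is_coupling_def)

lemma transport_cost_point_mass:
  assumes "finite V" "x \<in> V" "a \<in> V"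
  shows "transport_cost V G (\<lambda>u w. if u = x \<and> w = a then 1 else 0) = real (gdist V G x a)"
proof -
  have "(\<Sum>w\<in>V. (if u = x \<and> w = a then 1 else 0) * real (gdist V G u w)) =
      (\<Sum>w\<in>V. if u = x \<and> w = a then real (gdist V G x a) else 0)" for u
    by (intro sum.cong) auto
  also have "\<dots> u = (if u = x then real (gdist V G x a) else 0)" for u
    using assms by (cases "u = x") simp_all
  finally have "(\<Sum>w\<in>V. (if u = x \<and> w = a then 1 else 0) * real (gdist V G u w)) =
      (if u = x then real (gdist V G x a) else 0)" for u .
  then show ?thesis using assms by (simp add: transport_cost_def)
qed

text \<open>Mixing a coupling for laziness \<open>\<alpha>\<close> with the point mass at \<open>(x, a)\<close> gives a coupling for
  laziness \<open>1 - t (1 - \<alpha>)\<close>.\<close>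
lemma wasserstein_lazy_mix_le:
  assumes sg: "simple_graph V G" and xa: "G x a"
    and \<alpha>: "0 \<le> \<alpha>" "\<alpha> \<le> 1" and t: "0 < t" "t \<le> 1"
  defines "W \<equiv> \<lambda>\<beta>. wasserstein V G (lazy_measure V G \<beta> x) (lazy_measure V G \<beta> a)"
  shows "W (1 - t * (1 - \<alpha>)) \<le> t * W \<alpha> + (1 - t) * real (gdist V G x a)"
proof -
  let ?C = "\<lambda>\<beta>. transport_cost V G ` {\<pi>. is_coupling V (lazy_measure V G \<beta> x) (lazy_measure V G \<beta> a) \<pi>}"
  define \<beta> where "\<beta> = 1 - t * (1 - \<alpha>)"
  define d where "d = real (gdist V G x a)"
  have fin: "finite V" and V: "x \<in> V" "a \<in> V" using sg xa by (auto simp: simple_graph_def)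
  have mix: "W \<beta> \<le> t * c + (1 - t) * d" if "c \<in> ?C \<alpha>" for c
  proof -
    obtain \<pi> where \<pi>: "is_coupling V (lazy_measure V G \<alpha> x) (lazy_measure V G \<alpha> a) \<pi>"
      and c: "c = transport_cost V G \<pi>"
      using \<open>c \<in> ?C \<alpha>\<close> by blast
    let ?\<pi>' = "\<lambda>u w. t * \<pi> u w + (1 - t) * (if u = x \<and> w = a then 1 else 0)"
    have "is_coupling V (lazy_measure V G \<beta> x) (lazy_measure V G \<beta> a) ?\<pi>'"
      unfolding \<beta>_def lazy_measure_mix
      using is_coupling_convex[OF \<pi> is_coupling_point_mass[OF fin V]] t by simp
    then have "W \<beta> \<le> transport_cost V G ?\<pi>'"
      unfolding W_def wasserstein_eq_Inf_transport_cost
      by (intro cInf_lower[OF _ bdd_below_transport_cost]) blast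
    also have "transport_cost V G ?\<pi>' = t * c + (1 - t) * d"
      unfolding transport_cost_convex transport_cost_point_mass[OF fin V] c d_def ..
    finally show ?thesis .
  qed
  have "W \<alpha> = Inf (?C \<alpha>)" by (simp add: W_def wasserstein_eq_Inf_transport_cost)
  also have "Inf (?C \<alpha>) \<ge> (W \<beta> - (1 - t) * d) / t"
  proof (rule cInf_greatest)
    show "?C \<alpha> \<noteq> {}" using ex_coupling_lazy_measure[OF sg xa \<alpha>] by blast
  next
    fix c assume "c \<in> ?C \<alpha>"
    then have "W \<beta> \<le> t * c + (1 - t) * d" by (rule mix)
    then show "(W \<beta> - (1 - t) * d) / t \<le> c"
      using t by (simp add: pos_divide_le_eq mult.commute[of c])
  qed
  finally have "W \<beta> - (1 - t) * d \<le> W \<alpha> * t" using t by (simp add: pos_divide_le_eq)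
  then show ?thesis unfolding \<beta>_def d_def by (simp add: algebra_simps)
qed

lemma kappa_alpha_div_mono:
  assumes sg: "simple_graph V G" and conn: "connected_graph V G" and xa: "G x a"
    and \<alpha>\<beta>: "0 \<le> \<alpha>" "\<alpha> \<le> \<beta>" "\<beta> < 1"
  shows "kappa_alpha V G \<alpha> x a / (1 - \<alpha>) \<le> kappa_alpha V G \<beta> x a / (1 - \<beta>)"
proof -
  define t where "t = (1 - \<beta>) / (1 - \<alpha>)"
  have t: "0 < t" "t \<le> 1" using \<alpha>\<beta> by (auto simp: t_def)
  have \<beta>: "1 - \<beta> = t * (1 - \<alpha>)" using \<alpha>\<beta> by (simp add: t_def)
  have "wasserstein V G (lazy_measure V G \<beta> x) (lazy_measure V G \<beta> a) \<le>
      t * wasserstein V G (lazy_measure V G \<alpha> x) (lazy_measure V G \<alpha> a) + (1 - t)"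
    using wasserstein_lazy_mix_le[OF sg xa _ _ t, of \<alpha>] gdist_adjacent[OF sg conn xa] \<alpha>\<beta> \<beta>
    by (simp add: algebra_simps)
  then have "t * kappa_alpha V G \<alpha> x a \<le> kappa_alpha V G \<beta> x a"
    by (simp add: kappa_alpha_def algebra_simps)
  moreover have "kappa_alpha V G \<alpha> x a / (1 - \<alpha>) = t * kappa_alpha V G \<alpha> x a / (1 - \<beta>)"
    using t \<beta> \<alpha>\<beta> by simp
  ultimately show ?thesis using \<alpha>\<beta> by (simp add: divide_right_mono)
qed

text \<open>By the monotonicity above the limit defining the curvature exists as a supremum.\<close>
lemma kappa_LLY_nonpos:
  assumes sg: "simple_graph V G" and conn: "connected_graph V G" and xa: "G x a"
    and nonpos: "\<And>\<alpha>. 0 \<le> \<alpha> \<Longrightarrow> \<alpha> < 1 \<Longrightarrow> kappa_alpha V G \<alpha> x a \<le> 0"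
  shows "kappa_LLY V G x a \<le> 0"
proof -
  define h where "h = (\<lambda>\<alpha>. kappa_alpha V G \<alpha> x a / (1 - \<alpha>))"
  define I :: "real set" where "I = {..<1} \<inter> {0..1}"
  have h_nonpos: "h \<alpha> \<le> 0" if "\<alpha> \<in> I" for \<alpha>
    using nonpos[of \<alpha>] that by (simp add: h_def I_def divide_nonpos_pos)
  have "(h \<longlongrightarrow> Sup (h ` I)) (at 1 within I)"
    unfolding I_def
  proof (rule Lim_left_bound[where I = "{0..1}" and K = 0])
    fix \<alpha> \<beta> :: real assume "\<alpha> \<in> {0..1}" "\<beta> \<in> {0..1}" "\<beta> < 1" "\<alpha> \<le> \<beta>"
    then show "h \<alpha> \<le> h \<beta>" unfolding h_def by (intro kappa_alpha_div_mono[OF sg conn xa]) auto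
  next
    fix \<beta> :: real assume "\<beta> \<in> {0..1}" "\<beta> < 1"
    then show "h \<beta> \<le> 0" using h_nonpos by (simp add: I_def)
  qed
  moreover have "at 1 within I = at_left 1"
    unfolding I_def by (rule at_within_nhd[of _ "{0<..}"]) auto
  ultimately have "kappa_LLY V G x a = Sup (h ` I)"
    unfolding kappa_LLY_def h_def[symmetric] by (intro tendsto_Lim) auto
  also have "Sup (h ` I) \<le> 0"
  proof (rule cSup_least)
    have "0 \<in> I" by (simp add: I_def)
    then show "h ` I \<noteq> {}" by blast
  qed (use h_nonpos in blast)
  finally show ?thesis .
qed

lemma sum_ge_twice_card:
  fixes f :: "'a \<Rightarrow> real"
  assumes "finite N" "a \<in> N" "f a = 1" "\<And>z. z \<in> N - {a} \<Longrightarrow> 2 \<le> f z"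
    and "z0 \<in> N - {a}" "3 \<le> f z0"
  shows "2 * real (card N) \<le> sum f N"
proof -
  have "f z0 - 2 \<le> (\<Sum>z\<in>N - {a}. f z - 2)"
    using assms by (intro member_le_sum) auto
  then have "2 * real (card (N - {a})) + 1 \<le> sum f (N - {a})"
    using assms(6) by (simp add: sum_subtractf)
  moreover have "sum f N = f a + sum f (N - {a})" using assms(1,2) by (simp add: sum.remove)
  moreover have "real (card N) = real (card (N - {a})) + 1"
    using assms(1,2) card_gt_0_iff[of N] by (auto simp: card_Diff_singleton of_nat_diff)
  ultimately show ?thesis using assms(3) by linarith
qed

text \<open>The test function is the distance to \<open>b\<close>: under \<open>m\<^sub>a\<close> its mean is exactly 1, while
  under \<open>m\<^sub>x\<close> it is at least 2, because every other neighbour of \<open>x\<close> is at distance at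
  least 2 from \<open>b\<close> and one of them at distance at least 3.\<close>
lemma kappa_LLY_nonpos_at_degree_2:
  assumes sg: "simple_graph V G" and conn: "connected_graph V G" and xa: "G x a"
    and Na: "neighbors V G a = {x, b}" and xb: "x \<noteq> b"
    and far: "\<And>z. z \<in> neighbors V G x - {a} \<Longrightarrow> 2 \<le> gdist V G z b"
    and z0: "z0 \<in> neighbors V G x - {a}" "3 \<le> gdist V G z0 b"
  shows "kappa_LLY V G x a \<le> 0"
proof -
  define f where "f v = real (gdist V G v b)" for v
  have fin: "finite V" using sg by (simp add: simple_graph_def)
  have ab: "G a b" using Na by (auto simp: neighbors_def)
  then have V: "x \<in> V" "a \<in> V" "b \<in> V" and "a \<noteq> b"
    using sg xa by (auto simp: simple_graph_def)
  have lip: "f u - f w \<le> real (gdist V G u w)" if "u \<in> V" "w \<in> V" for u w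
    using gdist_triangle[OF conn that V(3)] by (simp add: f_def)
  have fb: "f b = 0" using gdist_self[OF V(3)] by (simp add: f_def)
  have fa: "f a = 1" using gdist_adjacent[OF sg conn ab] by (simp add: f_def)
  have "\<not> G x b"
  proof
    assume "G x b"
    then have "b \<in> neighbors V G x - {a}" using V \<open>a \<noteq> b\<close> by (simp add: neighbors_def)
    then show False using far[of b] gdist_self[OF V(3)] by simp
  qed
  then have fx: "f x = 2" using gdist_eq_2[OF sg conn xa ab xb] by (simp add: f_def)
  have N: "finite (neighbors V G x)" "a \<in> neighbors V G x"
    using fin xa V by (simp_all add: neighbors_def)
  then have "0 < degree V G x" by (auto simp: degree_def card_gt_0_iff)
  have sum_x: "2 * real (degree V G x) \<le> (\<Sum>u\<in>neighbors V G x. f u)"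
    unfolding degree_def using N fa far z0 by (intro sum_ge_twice_card) (auto simp: f_def)
  have deg_a: "degree V G a = 2" using Na xb by (simp add: degree_def)
  have "kappa_alpha V G \<alpha> x a \<le> 0" if \<alpha>: "0 \<le> \<alpha>" "\<alpha> < 1" for \<alpha>
  proof -
    have "2 \<le> (\<Sum>u\<in>V. lazy_measure V G \<alpha> x u * f u)"
      using sum_lazy_measure_ge[OF sg V(1) \<open>0 < degree V G x\<close> _ sum_x] fx \<alpha> by (simp add: algebra_simps)
    moreover have "(\<Sum>u\<in>V. lazy_measure V G \<alpha> a u * f u) = 1"
      using sum_lazy_measure[OF sg V(2), of \<alpha> f] deg_a Na xb fx fa fb
      by (simp add: diff_divide_distrib)
    moreover obtain \<pi> where "is_coupling V (lazy_measure V G \<alpha> x) (lazy_measure V G \<alpha> a) \<pi>"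
      using ex_coupling_lazy_measure[OF sg xa] \<alpha> by fastforce
    note wasserstein_ge_Lipschitz[OF fin this lip]
    ultimately show ?thesis by (simp add: kappa_alpha_def)
  qed
  then show ?thesis by (rule kappa_LLY_nonpos[OF sg conn xa])
qed

section \<open>Generalized Halin graphs\<close>

lemma leaf_neighbor_unique:
  assumes "simple_graph V E" "is_leaf V E l" "E p l" "E q l"
  shows "p = q"
proof -
  obtain s where "neighbors V E l = {s}"
    using assms(2) by (auto simp: is_leaf_def degree_def card_1_singleton_iff)
  moreover have "p \<in> neighbors V E l" "q \<in> neighbors V E l"
    using assms by (auto simp: simple_graph_def neighbors_def)
  ultimately show ?thesis by (metis singletonD)
qed

lemma next_leaf_unique:
  assumes sg: "simple_graph V E" and "next_leaf V E rot a b1" "next_leaf V E rot a b2"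
  shows "b1 = b2"
proof -
  let ?l = "\<lambda>p m. snd ((face_step rot ^^ m) (p, a))"
  obtain p1 n1 where p1: "E p1 a" "0 < n1" "?l p1 n1 = b1"
      "\<And>m. 0 < m \<Longrightarrow> m < n1 \<Longrightarrow> \<not> is_leaf V E (?l p1 m)"
    using assms(2) unfolding next_leaf_def by blast
  obtain p2 n2 where p2: "E p2 a" "0 < n2" "?l p2 n2 = b2"
      "\<And>m. 0 < m \<Longrightarrow> m < n2 \<Longrightarrow> \<not> is_leaf V E (?l p2 m)"
    using assms(3) unfolding next_leaf_def by blast
  have leaves: "is_leaf V E a" "is_leaf V E b1" "is_leaf V E b2"
    using assms(2,3) by (auto simp: next_leaf_def)
  have "p1 = p2" using leaf_neighbor_unique[OF sg leaves(1) p1(1) p2(1)] .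
  moreover have "\<not> n1 < n2" "\<not> n2 < n1"
    using p1 p2 leaves \<open>p1 = p2\<close> by auto
  ultimately show ?thesis using p1 p2 by (metis linorder_neqE_nat)
qed

definition darts :: "('a \<Rightarrow> 'a \<Rightarrow> bool) \<Rightarrow> ('a \<times> 'a) set" where
  "darts E = {(u, v). E u v}"

lemma face_step_darts:
  assumes sg: "simple_graph V E" and rs: "rotation_system V E rot"
  shows "face_step rot ` darts E \<subseteq> darts E" and "inj_on (face_step rot) (darts E)"
proof -
  have bij: "bij_betw (rot v) (neighbors V E v) (neighbors V E v)"
    and nb: "u \<in> neighbors V E v" if "E u v" for u v
    using that sg rs by (auto simp: rotation_system_def simple_graph_def neighbors_def)
  show "face_step rot ` darts E \<subseteq> darts E"
  proof
    fix d assume "d \<in> face_step rot ` darts E"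
    then obtain u v where uv: "E u v" "d = (v, rot v u)" by (auto simp: darts_def face_step_def)
    then have "rot v u \<in> neighbors V E v" using bij_betw_apply[OF bij nb] by blast
    then show "d \<in> darts E" using uv by (simp add: darts_def neighbors_def)
  qed
  show "inj_on (face_step rot) (darts E)"
  proof (rule inj_onI)
    fix d1 d2 assume "d1 \<in> darts E" "d2 \<in> darts E" "face_step rot d1 = face_step rot d2"
    then obtain u1 u2 v where d: "d1 = (u1, v)" "d2 = (u2, v)" "E u1 v" "E u2 v"
        "rot v u1 = rot v u2"
      by (cases d1, cases d2) (auto simp: darts_def face_step_def)
    then show "d1 = d2"
      using inj_onD[OF bij_betw_imp_inj_on[OF bij[OF d(3)]] d(5) nb[OF d(3)] nb[OF d(4)]] by simp
  qed
qed

lemma inj_on_funpow: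
  assumes "inj_on f A" "f ` A \<subseteq> A"
  shows "inj_on (f ^^ n) A"
proof (induction n)
  case (Suc n)
  have "inj_on (f ^^ n) (f ` A)" using Suc.IH assms(2) by (rule inj_on_subset)
  from comp_inj_on[OF assms(1) this] show ?case
    by (simp add: funpow_Suc_right o_def del: funpow.simps)
qed simp

lemma funpow_in: "f ` A \<subseteq> A \<Longrightarrow> x \<in> A \<Longrightarrow> (f ^^ n) x \<in> A"
  by (induction n) auto

lemma funpow_eq_imp_eq_funpow_diff:
  assumes "inj_on f A" "f ` A \<subseteq> A" "x \<in> A" "y \<in> A"
    and "(f ^^ m) x = (f ^^ n) y" "m \<le> n"
  shows "x = (f ^^ (n - m)) y"
proof -
  have "(f ^^ n) y = (f ^^ m) ((f ^^ (n - m)) y)"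
    using assms(6) by (metis comp_apply funpow_add le_add_diff_inverse)
  then show ?thesis
    using inj_onD[OF inj_on_funpow[OF assms(1,2)]] assms(3-5) funpow_in[OF assms(2,4)] by metis
qed

text \<open>Tracing the face backwards from the dart entering \<open>b\<close> (which is unique, \<open>b\<close> being a
  leaf) recovers the previous leaf.\<close>
lemma next_leaf_inj:
  assumes sg: "simple_graph V E" and rs: "rotation_system V E rot"
    and "next_leaf V E rot a1 b" "next_leaf V E rot a2 b"
  shows "a1 = a2"
proof -
  let ?F = "face_step rot"
  have step: "inj_on ?F (darts E)" "?F ` darts E \<subseteq> darts E"
    using face_step_darts[OF sg rs] by auto
  obtain p1 n1 where p1: "E p1 a1" "0 < n1" "snd ((?F ^^ n1) (p1, a1)) = b"
      "\<And>m. 0 < m \<Longrightarrow> m < n1 \<Longrightarrow> \<not> is_leaf V E (snd ((?F ^^ m) (p1, a1)))"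
    using assms(3) unfolding next_leaf_def by blast
  obtain p2 n2 where p2: "E p2 a2" "0 < n2" "snd ((?F ^^ n2) (p2, a2)) = b"
      "\<And>m. 0 < m \<Longrightarrow> m < n2 \<Longrightarrow> \<not> is_leaf V E (snd ((?F ^^ m) (p2, a2)))"
    using assms(4) unfolding next_leaf_def by blast
  have leaves: "is_leaf V E a1" "is_leaf V E a2" "is_leaf V E b"
    using assms(3,4) by (auto simp: next_leaf_def)
  have d: "(p1, a1) \<in> darts E" "(p2, a2) \<in> darts E" using p1 p2 by (auto simp: darts_def)
  then have "(?F ^^ n1) (p1, a1) \<in> darts E" "(?F ^^ n2) (p2, a2) \<in> darts E"
    using funpow_in[OF step(2)] by auto
  then have eq: "(?F ^^ n1) (p1, a1) = (?F ^^ n2) (p2, a2)"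
    using leaf_neighbor_unique[OF sg leaves(3)] p1(3) p2(3) by (auto simp: darts_def prod_eq_iff)
  show ?thesis
  proof (cases "n1 \<le> n2")
    case True
    then have "(p1, a1) = (?F ^^ (n2 - n1)) (p2, a2)"
      using funpow_eq_imp_eq_funpow_diff[OF step d eq] by blast
    moreover have "n2 - n1 = 0"
    proof (rule ccontr)
      assume "n2 - n1 \<noteq> 0"
      then have "\<not> is_leaf V E (snd ((?F ^^ (n2 - n1)) (p2, a2)))" using p1(2) by (intro p2(4)) auto
      then show False using leaves(1) calculation by (metis snd_conv)
    qed
    ultimately show ?thesis by simp
  next
    case False
    then have "(p2, a2) = (?F ^^ (n1 - n2)) (p1, a1)"
      using funpow_eq_imp_eq_funpow_diff[OF step d(2,1) eq[symmetric]] by simp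
    moreover have "n1 - n2 = 0"
    proof (rule ccontr)
      assume "n1 - n2 \<noteq> 0"
      then have "\<not> is_leaf V E (snd ((?F ^^ (n1 - n2)) (p1, a1)))" using p2(2) by (intro p1(4)) auto
      then show False using leaves(2) calculation by (metis snd_conv)
    qed
    ultimately show ?thesis using False by simp
  qed
qed

lemma card_next_leaf_neighbors:
  assumes sg: "simple_graph V E" and rs: "rotation_system V E rot"
  shows "card {z. next_leaf V E rot z c \<or> next_leaf V E rot c z} \<le> 2"
proof -
  let ?A = "{z. next_leaf V E rot z c}" and ?B = "{z. next_leaf V E rot c z}"
  have "finite V" using sg by (simp add: simple_graph_def)
  then have fin: "finite ?A" "finite ?B"
    by (auto intro: finite_subset[of _ V] simp: next_leaf_def is_leaf_def)
  have "card ?A \<le> Suc 0"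
    unfolding card_le_Suc0_iff_eq[OF fin(1)] using next_leaf_inj[OF sg rs] by blast
  moreover have "card ?B \<le> Suc 0"
    unfolding card_le_Suc0_iff_eq[OF fin(2)] using next_leaf_unique[OF sg] by blast
  moreover have "{z. next_leaf V E rot z c \<or> next_leaf V E rot c z} = ?A \<union> ?B" by blast
  ultimately show ?thesis using card_Un_le[of ?A ?B] by simp
qed

lemma halin_adj_sym: "simple_graph V T \<Longrightarrow> halin_adj V T rot u v \<Longrightarrow> halin_adj V T rot v u"
  by (auto simp: halin_adj_def simple_graph_def)

lemma halin_adj_if_tree_adj: "simple_graph V T \<Longrightarrow> T u v \<Longrightarrow> halin_adj V T rot u v"
  by (auto simp: halin_adj_def simple_graph_def)

lemma halin_adj_non_leaf:
  assumes "simple_graph V T" "\<not> is_leaf V T u"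
  shows "halin_adj V T rot u v \<longleftrightarrow> T u v"
  using assms by (auto simp: halin_adj_def next_leaf_def simple_graph_def)

lemma neighbors_halin_non_leaf:
  "simple_graph V T \<Longrightarrow> \<not> is_leaf V T u \<Longrightarrow> neighbors V (halin_adj V T rot) u = neighbors V T u"
  by (simp add: neighbors_def halin_adj_non_leaf)

lemma simple_graph_halin: "simple_graph V T \<Longrightarrow> simple_graph V (halin_adj V T rot)"
  unfolding simple_graph_def halin_adj_def next_leaf_def is_leaf_def by blast

lemma connected_graph_halin:
  assumes "simple_graph V T" "connected_graph V T"
  shows "connected_graph V (halin_adj V T rot)"
proof -
  have "is_walk V (halin_adj V T rot) xs" if "is_walk V T xs" for xs
    using that by (rule is_walk_mono) (rule halin_adj_if_tree_adj[OF assms(1)])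
  then show ?thesis using assms(2) unfolding connected_graph_def by blast
qed

text \<open>Two Halin steps from \<open>z\<close> to \<open>b\<close> must pass through \<open>c\<close>, and \<open>z c\<close> is no tree edge since
  \<open>d\<^sub>T(x, c) = 3\<close>.\<close>
lemma halin_gdist_other_neighbor:
  fixes rot :: "'a \<Rightarrow> 'a \<Rightarrow> 'a"
  assumes T: "is_tree V T"
    and xa: "T x a" and Na: "neighbors V T a = {x, b}" and Nb: "neighbors V T b = {a, c}"
    and dist: "gdist V T x b = 2" "gdist V T x c = 3"
    and z: "T x z" "z \<noteq> a"
  defines "H \<equiv> halin_adj V T rot"
  shows "2 \<le> gdist V H z b"
    and "gdist V H z b \<le> 2 \<Longrightarrow> next_leaf V T rot z c \<or> next_leaf V T rot c z"
proof -
  have sg: "simple_graph V T" and conn: "connected_graph V T" using T by (auto simp: is_tree_def)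
  have Hsg: "simple_graph V H" and Hconn: "connected_graph V H"
    unfolding H_def using simple_graph_halin[OF sg] connected_graph_halin[OF sg conn] by auto
  have V: "x \<in> V" "z \<in> V" "b \<in> V" "c \<in> V"
    using sg z(1) Na Nb by (auto simp: simple_graph_def neighbors_def)
  have T_dist: "T u v \<Longrightarrow> gdist V T u v = 1" for u v by (rule gdist_adjacent[OF sg conn])
  have "x \<noteq> b" using dist gdist_self[OF V(1)] by auto
  have "\<not> T x b" "\<not> T x c" "a \<noteq> c" using dist T_dist T_dist[OF xa] by auto
  have "x \<noteq> z" using z(1) sg by (auto simp: simple_graph_def)
  have "\<not> T z c"
  proof
    assume "T z c"
    then have "gdist V T x c \<le> 2" using gdist_triangle[OF conn V(1,2,4)] T_dist z(1) by simp
    then show False using dist by simp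
  qed
  have "\<not> is_leaf V T a" "\<not> is_leaf V T b"
    using Na Nb \<open>x \<noteq> b\<close> \<open>a \<noteq> c\<close> by (auto simp: is_leaf_def degree_def)
  then have H_a: "H a v \<longleftrightarrow> v \<in> {x, b}" and H_b: "H b v \<longleftrightarrow> v \<in> {a, c}" for v
    using adj_iff_mem_neighbors[OF Hsg] neighbors_halin_non_leaf[OF sg] Na Nb
    by (simp_all add: H_def)
  have H_sym: "H u v \<Longrightarrow> H v u" for u v using halin_adj_sym[OF sg] by (simp add: H_def)
  have "z \<noteq> b" "\<not> H z b" using z H_b[of z] H_sym \<open>\<not> T x b\<close> \<open>\<not> T x c\<close> by auto
  then show "2 \<le> gdist V H z b" using gdist_le_1_iff[OF Hconn V(2,3)] by linarith
  assume "gdist V H z b \<le> 2"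
  then obtain w where "H z w" "H w b"
    using gdist_le_2_imp[OF Hconn V(2,3)] \<open>z \<noteq> b\<close> \<open>\<not> H z b\<close> by blast
  moreover have "w \<noteq> a" using \<open>H z w\<close> H_a[of z] H_sym \<open>x \<noteq> z\<close> \<open>z \<noteq> b\<close> by auto
  ultimately have "H z c" using H_b H_sym by blast
  then show "next_leaf V T rot z c \<or> next_leaf V T rot c z"
    using \<open>\<not> T z c\<close> by (simp add: H_def halin_adj_def)
qed

text \<open>At most two of the at least three other neighbours of \<open>x\<close> are cycle-neighbours of \<open>c\<close>.\<close>
lemma kappa_LLY_halin_nonpos:
  assumes T: "is_tree V T" and rs: "rotation_system V T rot"
    and xa: "T x a" and Na: "neighbors V T a = {x, b}" and Nb: "neighbors V T b = {a, c}"
    and dist: "gdist V T x b = 2" "gdist V T x c = 3" and deg: "4 \<le> degree V T x"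
  shows "kappa_LLY V (halin_adj V T rot) x a \<le> 0"
proof -
  let ?H = "halin_adj V T rot"
  let ?C = "{z. next_leaf V T rot z c \<or> next_leaf V T rot c z}"
  define Z where "Z = neighbors V T x - {a}"
  have sg: "simple_graph V T" and conn: "connected_graph V T" using T by (auto simp: is_tree_def)
  have "finite (neighbors V T x)" using sg by (simp add: simple_graph_def neighbors_def)
  moreover have "a \<in> neighbors V T x" using xa sg by (auto simp: simple_graph_def neighbors_def)
  ultimately have "3 \<le> card Z" using deg by (simp add: Z_def degree_def)
  have "\<exists>z0\<in>Z. 3 \<le> gdist V ?H z0 b"
  proof (rule ccontr)
    assume "\<not> ?thesis"
    then have "Z \<subseteq> ?C"
      using halin_gdist_other_neighbor(2)[OF T xa Na Nb dist] by (force simp: Z_def neighbors_def)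
    moreover have "finite ?C"
      using sg by (auto intro: finite_subset[of _ V] simp: simple_graph_def next_leaf_def is_leaf_def)
    ultimately have "card Z \<le> card ?C" by (rule card_mono[rotated])
    then have "card Z \<le> 2" using card_next_leaf_neighbors[OF sg rs, of c] by linarith
    then show False using \<open>3 \<le> card Z\<close> by simp
  qed
  then obtain z0 where z0: "z0 \<in> Z" "3 \<le> gdist V ?H z0 b" by blast
  have "x \<noteq> b" using dist gdist_self[of x V T] sg xa by (auto simp: simple_graph_def)
  then have "\<not> is_leaf V T x" "\<not> is_leaf V T a"
    using deg Na by (auto simp: is_leaf_def degree_def)
  then have Nx: "neighbors V ?H x = neighbors V T x" and NHa: "neighbors V ?H a = {x, b}"
    using neighbors_halin_non_leaf[OF sg] Na by auto
  have far: "2 \<le> gdist V ?H z b" if "z \<in> neighbors V ?H x - {a}" for z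
  proof -
    have "T x z" "z \<noteq> a" using that Nx by (auto simp: neighbors_def)
    then show ?thesis by (rule halin_gdist_other_neighbor(1)[OF T xa Na Nb dist])
  qed
  show ?thesis
    using kappa_LLY_nonpos_at_degree_2[OF simple_graph_halin[OF sg] connected_graph_halin[OF sg conn]
        halin_adj_if_tree_adj[OF sg xa] NHa \<open>x \<noteq> b\<close> far] z0 Nx
    by (simp add: Z_def)
qed

theorem corollary3p3:
  fixes V :: "'a set" and tadj :: "'a \<Rightarrow> 'a \<Rightarrow> bool" and rot :: "'a \<Rightarrow> 'a \<Rightarrow> 'a" and x :: 'a
  assumes "gen_halin V tadj rot"
    and "\<forall>u v. halin_adj V tadj rot u v \<longrightarrow> kappa_LLY V (halin_adj V tadj rot) u v > 0"
    and "x \<in> V" and "degree V tadj x = max_degree V tadj"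
    and "card {v \<in> V. is_leaf V tadj v} = max_degree V tadj"
    and "max_degree V tadj \<ge> 4"
  shows "\<forall>y\<in>V. is_leaf V tadj y \<longrightarrow> gdist V tadj x y \<le> 2"
proof (intro ballI impI)
  fix y assume y: "y \<in> V" "is_leaf V tadj y"
  have T: "is_tree V tadj" and rs: "rotation_system V tadj rot"
    using assms(1) by (auto simp: gen_halin_def)
  then have forest: "forest V tadj" and sg: "simple_graph V tadj" and conn: "connected_graph V tadj"
    by (auto simp: is_tree_def is_tree_imp_forest)
  show "gdist V tadj x y \<le> 2"
  proof (rule ccontr)
    assume "\<not> gdist V tadj x y \<le> 2"
    then have "3 \<le> gdist V tadj x y" by simp
    then obtain a b c where path: "tadj x a" "tadj a b" "tadj b c"
      "gdist V tadj x b = 2" "gdist V tadj x c = 3"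
      by (rule gdist_ge_3_obtain_path[OF conn assms(3) y(1)])
    have "x \<noteq> b" using path(4) gdist_self[OF assms(3)] by auto
    have "a \<noteq> c" using path(5) gdist_adjacent[OF sg conn path(1)] by auto
    have "card {v \<in> V. is_leaf V tadj v} \<le> degree V tadj x" using assms(4,5) by simp
    from path_inner_neighbors_if_card_leaves_le_degree[OF forest this path(1-3) \<open>x \<noteq> b\<close> \<open>a \<noteq> c\<close>]
    have "kappa_LLY V (halin_adj V tadj rot) x a \<le> 0"
      using kappa_LLY_halin_nonpos[OF T rs path(1) _ _ path(4,5)] assms(4,6) by simp
    moreover have "halin_adj V tadj rot x a" using halin_adj_if_tree_adj[OF sg path(1)] .
    ultimately show False using assms(2) by fastforce
  qed
qed

end
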